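(* Let $G$ be a graph on vertex set $[n]$ and $r\ge1$ an integer, and suppose that no vertex of $G$ has more than one cycle in its $r$-neighborhood. Define the relation $i\sim j$ iff there is a cycle contained in the intersection of the $r$-neighborhoods of $i$ and $j$, and let $B=A^{[r]}-A^{\{r\}}$. Then for all $i,j\in[n]$: (i) $B_{ij}\ne0$ implies $i\sim j$; (ii) $B_{ij}\ne0$ implies there are at least two paths of length $\le r$ from $i$ to $j$; (iii) $|B_{ij}|\le 1$; (iv) there are at most two paths of length $\le r$ from $i$ to $j$.
   Context: The $r$-neighborhood of a vertex $v$ is the subgraph of $G$ induced by vertices at graph distance at most $r$ from $v$. $A^{[r]}$ is the $r$-distance matrix: $A^{[r]}_{ij}=1$ if $d_G(i,j)=r$ and $0$ otherwise. $A^{\{r\}}$ is the length-$r$ self-avoiding-walk matrix: $A^{\{r\}}_{ij}$ is the number of self-avoiding walks (paths) of length exactly $r$ between $i$ and $j$. *)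

theory Defs
  imports Main "HOL-Library.Extended_Nat"
begin

(* A simple graph is given by an edge relation E (symmetric, irreflexive).
   Walks are nonempty vertex lists with consecutive vertices adjacent;
   a walk with k+1 vertices has length k. *)

definition walk :: "('a \<Rightarrow> 'a \<Rightarrow> bool) \<Rightarrow> 'a list \<Rightarrow> bool" where
  "walk E xs \<longleftrightarrow> xs \<noteq> [] \<and> (\<forall>k. Suc k < length xs \<longrightarrow> E (xs ! k) (xs ! Suc k))"

definition gpath :: "('a \<Rightarrow> 'a \<Rightarrow> bool) \<Rightarrow> 'a list \<Rightarrow> bool" where
  "gpath E xs \<longleftrightarrow> walk E xs \<and> distinct xs"

(* graph distance; \<infinity> if no walk *)
definition gdist :: "('a \<Rightarrow> 'a \<Rightarrow> bool) \<Rightarrow> 'a \<Rightarrow> 'a \<Rightarrow> enat" where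
  "gdist E i j = (INF xs \<in> {xs. walk E xs \<and> hd xs = i \<and> last xs = j}. enat (length xs - 1))"

definition ball :: "'a set \<Rightarrow> ('a \<Rightarrow> 'a \<Rightarrow> bool) \<Rightarrow> 'a \<Rightarrow> nat \<Rightarrow> 'a set" where
  "ball V E v r = {u \<in> V. gdist E v u \<le> enat r}"

definition dist_mat :: "('a \<Rightarrow> 'a \<Rightarrow> bool) \<Rightarrow> nat \<Rightarrow> 'a \<Rightarrow> 'a \<Rightarrow> int" where
  "dist_mat E r i j = (if gdist E i j = enat r then 1 else 0)"

definition saw_mat :: "('a \<Rightarrow> 'a \<Rightarrow> bool) \<Rightarrow> nat \<Rightarrow> 'a \<Rightarrow> 'a \<Rightarrow> int" where
  "saw_mat E r i j = int (card {xs. gpath E xs \<and> hd xs = i \<and> last xs = j \<and> length xs = r + 1})"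

definition paths_le :: "('a \<Rightarrow> 'a \<Rightarrow> bool) \<Rightarrow> nat \<Rightarrow> 'a \<Rightarrow> 'a \<Rightarrow> 'a list set" where
  "paths_le E r i j = {xs. gpath E xs \<and> hd xs = i \<and> last xs = j \<and> length xs \<le> r + 1}"

(* cycles, identified with their edge sets (sets of 2-element vertex sets) *)
definition cycle_edges :: "'a list \<Rightarrow> 'a set set" where
  "cycle_edges xs = {{xs ! k, xs ! ((k + 1) mod length xs)} | k. k < length xs}"

definition is_cycle :: "('a \<Rightarrow> 'a \<Rightarrow> bool) \<Rightarrow> 'a set set \<Rightarrow> bool" where
  "is_cycle E C \<longleftrightarrow> (\<exists>xs. distinct xs \<and> length xs \<ge> 3 \<and>
      (\<forall>k < length xs. E (xs ! k) (xs ! ((k + 1) mod length xs))) \<and> C = cycle_edges xs)"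

(* a cycle C is contained in the induced subgraph on S iff all its vertices lie in S *)
definition cycle_in :: "('a \<Rightarrow> 'a \<Rightarrow> bool) \<Rightarrow> 'a set set \<Rightarrow> 'a set \<Rightarrow> bool" where
  "cycle_in E C S \<longleftrightarrow> is_cycle E C \<and> \<Union>C \<subseteq> S"

definition cyc_rel :: "'a set \<Rightarrow> ('a \<Rightarrow> 'a \<Rightarrow> bool) \<Rightarrow> nat \<Rightarrow> 'a \<Rightarrow> 'a \<Rightarrow> bool" where
  "cyc_rel V E r i j \<longleftrightarrow> (\<exists>C. cycle_in E C (ball V E i r \<inter> ball V E j r))"

end

(* Two distinct paths with common endpoints close a cycle at the vertex a where they first
   branch, built from a and the vertices after it. All paths of length at most r from i to j
   lie in the r-neighbourhoods of both i and j, so two of them give i ~ j; and since the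
   r-neighbourhood of i contains only one cycle, there are no three such paths: at the first
   position where three paths do not all agree, either they branch three ways, and the unique
   cycle would give a three distinct neighbours, or two of them continue together, and the
   cycle they close avoids a while the cycle closed with the third path passes through a.
   The bounds on B follow by counting: a shortest walk from i to j is a path of length
   d(i,j), so A^[r]_ij = 1 gives a path of length exactly r, while a path of length r with
   d(i,j) < r comes with a second, shorter one. *)

theory Submission
  imports Defs "HOL-Library.Sublist"
begin

section \<open>Walks, paths and distance\<close>

lemma walk_Nil [simp]: "\<not> walk E []"
  by (simp add: walk_def)

lemma walk_singleton [simp]: "walk E [x]"
  by (simp add: walk_def)

lemma walk_Cons_Cons [simp]: "walk E (x # y # xs) \<longleftrightarrow> E x y \<and> walk E (y # xs)"
  by (auto simp: walk_def nth_Cons split: nat.splits)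

lemma walk_Cons: "xs \<noteq> [] \<Longrightarrow> walk E (x # xs) \<longleftrightarrow> E x (hd xs) \<and> walk E xs"
  by (cases xs) auto

lemma walk_append:
  assumes "xs \<noteq> []" "ys \<noteq> []"
  shows "walk E (xs @ ys) \<longleftrightarrow> walk E xs \<and> E (last xs) (hd ys) \<and> walk E ys"
  using assms by (induction xs rule: induct_list012) (auto simp: walk_Cons)

lemma walk_prefix: "walk E (xs @ ys) \<Longrightarrow> xs \<noteq> [] \<Longrightarrow> walk E xs"
  by (cases "ys = []") (auto simp: walk_append)

lemma walk_suffix: "walk E (xs @ ys) \<Longrightarrow> ys \<noteq> [] \<Longrightarrow> walk E ys"
  by (cases "xs = []") (auto simp: walk_append)

lemma walk_join: "walk E (xs @ [y]) \<Longrightarrow> walk E (y # ys) \<Longrightarrow> walk E (xs @ y # ys)"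
  by (cases "ys = []") (auto simp: walk_append[of "xs @ [y]" ys, simplified] walk_Cons)

lemma walk_rev:
  assumes "symp E" "walk E xs"
  shows "walk E (rev xs)"
  using assms(2)
proof (induction xs)
  case (Cons x xs)
  then show ?case by (cases "xs = []") (auto simp: walk_Cons walk_append last_rev sympD[OF assms(1)])
qed simp

lemma walk_set_subset:
  assumes "walk E xs" "hd xs \<in> V" "\<And>u v. E u v \<Longrightarrow> u \<in> V \<and> v \<in> V"
  shows "set xs \<subseteq> V"
  using assms(1,2) by (induction xs rule: induct_list012) (auto dest: assms(3))

lemma walk_shortcut_gpath:
  "walk E xs \<Longrightarrow> \<exists>ys. gpath E ys \<and> hd ys = hd xs \<and> last ys = last xs \<and> length ys \<le> length xs"
proof (induction "length xs" arbitrary: xs rule: less_induct)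
  case less
  show ?case
  proof (cases "distinct xs")
    case False
    then obtain as y bs cs where xs: "xs = as @ [y] @ bs @ [y] @ cs"
      using not_distinct_decomp by blast
    have "walk E (as @ [y])" "walk E (y # cs)"
      using less.prems xs walk_prefix[of E "as @ [y]"] walk_suffix[of E "as @ y # bs"] by auto
    then have "walk E (as @ y # cs)" by (rule walk_join)
    moreover have shorter: "length (as @ y # cs) < length xs" using xs by simp
    ultimately obtain ys where "gpath E ys" "hd ys = hd (as @ y # cs)" "last ys = last (as @ y # cs)"
      "length ys \<le> length (as @ y # cs)"
      using less.hyps by blast
    moreover have "hd (as @ y # cs) = hd xs" "last (as @ y # cs) = last xs"
      using xs by (cases as; simp)+
    ultimately show ?thesis using shorter by (metis less_imp_le order_trans)
  qed (use less.prems in \<open>auto simp: gpath_def\<close>)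
qed

lemma gdist_le_walk: "walk E xs \<Longrightarrow> gdist E (hd xs) (last xs) \<le> enat (length xs - 1)"
  unfolding gdist_def by (rule INF_lower) auto

lemma gdist_shortest_gpath:
  assumes "gdist E i j = enat d"
  obtains P where "gpath E P" "hd P = i" "last P = j" "length P = Suc d"
proof -
  define L where "L = (\<lambda>xs. enat (length xs - 1)) ` {xs. walk E xs \<and> hd xs = i \<and> last xs = j}"
  have "gdist E i j = Inf L" unfolding gdist_def L_def ..
  moreover have "L \<noteq> {}" using assms calculation by (auto simp: Inf_enat_def)
  ultimately have "gdist E i j \<in> L" by (auto simp: Inf_enat_def intro: LeastI)
  then obtain w where w: "walk E w" "hd w = i" "last w = j" "length w - 1 = d"
    using assms unfolding L_def by auto
  then have "length w = Suc d" by (cases w) auto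
  then obtain P where P: "gpath E P" "hd P = i" "last P = j" "length P \<le> Suc d"
    using walk_shortcut_gpath w by metis
  moreover have "enat d \<le> enat (length P - 1)"
    using gdist_le_walk[of E P] assms P by (simp add: gpath_def)
  moreover have "P \<noteq> []" using P by (auto simp: gpath_def)
  ultimately show thesis using that by (cases P) auto
qed

lemma paths_le_subset_balls:
  assumes edges_in: "\<And>u v. E u v \<Longrightarrow> u \<in> V \<and> v \<in> V" and sym: "symp E"
    and "i \<in> V" and P: "P \<in> paths_le E r i j"
  shows "set P \<subseteq> ball V E i r \<inter> ball V E j r"
proof
  fix v assume "v \<in> set P"
  then obtain us ws where P_split: "P = us @ v # ws" using split_list by metis
  have P: "walk E P" "hd P = i" "last P = j" "length P \<le> Suc r"
    using P by (auto simp: paths_le_def gpath_def)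
  have "walk E (us @ [v])" using P_split P(1) walk_prefix[of E "us @ [v]" ws] by simp
  then have "gdist E i v \<le> enat (length us)"
    using gdist_le_walk[of E "us @ [v]"] P(2) P_split by (cases us) auto
  also have "\<dots> \<le> enat r" using P(4) P_split by simp
  finally have i_v: "gdist E i v \<le> enat r" .
  have "walk E (rev (v # ws))"
    using walk_rev[OF sym walk_suffix[of E us "v # ws"]] P_split P(1) by simp
  then have "gdist E j v \<le> enat (length ws)"
    using gdist_le_walk[of E "rev (v # ws)"] P(3) P_split by (cases "ws = []") (auto simp: hd_append hd_rev)
  also have "\<dots> \<le> enat r" using P(4) P_split by simp
  finally have j_v: "gdist E j v \<le> enat r" .
  have "set P \<subseteq> V" using walk_set_subset[OF P(1) _ edges_in] P(2) \<open>i \<in> V\<close> by simp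
  then show "v \<in> ball V E i r \<inter> ball V E j r"
    using i_v j_v \<open>v \<in> set P\<close> by (auto simp: ball_def)
qed

lemma finite_paths_le:
  assumes "finite V" "\<And>u v. E u v \<Longrightarrow> u \<in> V \<and> v \<in> V" "i \<in> V"
  shows "finite (paths_le E r i j)"
proof (rule finite_subset)
  show "paths_le E r i j \<subseteq> {xs. set xs \<subseteq> V \<and> length xs \<le> Suc r}"
    using walk_set_subset[where V = V] assms(2,3) by (auto simp: paths_le_def gpath_def)
  show "finite {xs. set xs \<subseteq> V \<and> length xs \<le> Suc r}"
    using finite_lists_length_le[OF assms(1)] .
qed

lemma dist_mat_saw_mat_bounds:
  assumes fin: "finite (paths_le E r i j)" and le2: "card (paths_le E r i j) \<le> 2"
  shows "\<bar>dist_mat E r i j - saw_mat E r i j\<bar> \<le> 1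
    \<and> (dist_mat E r i j \<noteq> saw_mat E r i j \<longrightarrow> 2 \<le> card (paths_le E r i j))"
proof -
  define exact where "exact = {xs. gpath E xs \<and> hd xs = i \<and> last xs = j \<and> length xs = r + 1}"
  have exact_sub: "exact \<subseteq> paths_le E r i j" by (auto simp: exact_def paths_le_def)
  then have card_exact: "card exact \<le> card (paths_le E r i j)" by (rule card_mono[OF fin])
  have saw: "saw_mat E r i j = int (card exact)" by (simp add: saw_mat_def exact_def)
  consider (eq) "gdist E i j = enat r" | (less) d where "gdist E i j = enat d" "d < r"
    | (greater) "\<not> gdist E i j \<le> enat r"
  proof (cases "gdist E i j")
    case (enat d)
    then show thesis using that by (cases d r rule: linorder_cases) auto
  qed (use that in auto)
  then show ?thesis
  proof cases
    case eq
    obtain P where "gpath E P" "hd P = i" "last P = j" "length P = Suc r"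
      using gdist_shortest_gpath[OF eq] .
    then have "P \<in> exact" by (simp add: exact_def)
    then have "1 \<le> card exact" using finite_subset[OF exact_sub fin] by (auto simp: Suc_le_eq card_gt_0_iff)
    moreover have "dist_mat E r i j = 1" using eq by (simp add: dist_mat_def)
    ultimately show ?thesis using card_exact le2 saw by (intro conjI impI) linarith+
  next
    case less
    obtain P where "gpath E P" "hd P = i" "last P = j" "length P = Suc d"
      using gdist_shortest_gpath[OF less(1)] .
    then have "P \<in> paths_le E r i j" "P \<notin> exact" using less(2) by (auto simp: exact_def paths_le_def)
    then have "card exact < card (paths_le E r i j)"
      using exact_sub fin by (metis psubsetI psubset_card_mono)
    moreover have "dist_mat E r i j = 0" using less by (simp add: dist_mat_def)
    ultimately show ?thesis using le2 saw by (intro conjI impI) linarith+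
  next
    case greater
    have "exact = {}"
    proof (rule ccontr)
      assume "exact \<noteq> {}"
      then obtain P where "walk E P" "hd P = i" "last P = j" "length P = Suc r"
        by (auto simp: exact_def gpath_def)
      then show False using gdist_le_walk[of E P] greater by auto
    qed
    then show ?thesis using greater saw by (simp add: dist_mat_def)
  qed
qed

section \<open>Cycles closed by branching paths\<close>

lemma cycle_edges_vertices: "\<Union>(cycle_edges xs) \<subseteq> set xs"
  by (force simp: cycle_edges_def intro: nth_mem mod_less_divisor)

lemma cycle_edges_first: "xs \<noteq> [] \<Longrightarrow> {x, hd xs} \<in> cycle_edges (x # xs)"
  unfolding cycle_edges_def by (rule CollectI, rule exI[of _ 0]) (auto simp: hd_conv_nth)

lemma cycle_edges_closing: "xs \<noteq> [] \<Longrightarrow> {last xs, hd xs} \<in> cycle_edges xs"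
  unfolding cycle_edges_def
  by (rule CollectI, rule exI[of _ "length xs - 1"]) (auto simp: last_conv_nth hd_conv_nth)

lemma is_cycle_cycle_edges:
  assumes "distinct xs" "length xs \<ge> 3" "walk E xs" "E (last xs) (hd xs)"
  shows "is_cycle E (cycle_edges xs)"
  unfolding is_cycle_def
proof (intro exI conjI allI impI)
  fix k assume k: "k < length xs"
  show "E (xs ! k) (xs ! ((k + 1) mod length xs))"
  proof (cases "Suc k < length xs")
    case True
    then show ?thesis using assms(3) by (simp add: walk_def)
  next
    case False
    then have "Suc k = length xs" using k by simp
    then have "k = length xs - 1" "Suc k mod length xs = 0" by simp_all
    moreover have "xs \<noteq> []" using k by auto
    ultimately show ?thesis using assms(4) by (simp add: last_conv_nth hd_conv_nth)
  qed
qed (use assms in auto)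

lemma cycle_edges_neighbour:
  assumes "distinct xs" "p < length xs" "{xs ! p, x} \<in> cycle_edges xs"
  shows "x = xs ! (Suc p mod length xs) \<or> (\<exists>k < length xs. Suc k mod length xs = p \<and> x = xs ! k)"
proof -
  have "\<exists>k < length xs. {xs ! p, x} = {xs ! k, xs ! (Suc k mod length xs)}"
    using assms(3) unfolding cycle_edges_def by auto
  then obtain k where k: "k < length xs" and edge: "{xs ! p, x} = {xs ! k, xs ! (Suc k mod length xs)}"
    by blast
  have "Suc k mod length xs < length xs" using k by (metis mod_less_divisor not_less0 not_gr0)
  then show ?thesis
    using edge k assms(1,2) by (auto simp: doubleton_eq_iff nth_eq_iff_index_eq)
qed

lemma is_cycle_three_neighbours:
  assumes "is_cycle E C" "{a, x} \<in> C" "{a, y} \<in> C" "{a, z} \<in> C"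
  shows "x = y \<or> x = z \<or> y = z"
proof -
  obtain xs where xs: "distinct xs" "C = cycle_edges xs"
    using assms(1) unfolding is_cycle_def by blast
  have "a \<in> \<Union>C" using assms(2) by blast
  then have "a \<in> set xs" using cycle_edges_vertices[of xs] unfolding xs(2) by blast
  then obtain p where p: "p < length xs" "a = xs ! p" by (auto simp: in_set_conv_nth)
  have pred_unique: "k1 = k2"
    if "k1 < length xs" "k2 < length xs" "Suc k1 mod length xs = Suc k2 mod length xs" for k1 k2
    using that by (auto simp: mod_Suc split: if_splits)
  show ?thesis
    using cycle_edges_neighbour[OF xs(1) p(1)] assms(2-4) xs(2) p(2) pred_unique by metis
qed

lemma branching_walks_cycle:
  assumes sym: "symp E"
    and walks: "walk E (a # xs)" "walk E (a # ys)"
    and distinct: "distinct (a # xs)" "distinct (a # ys)"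
    and nonempty: "xs \<noteq> []" "ys \<noteq> []"
    and meet: "last xs = last ys" and branch: "hd xs \<noteq> hd ys"
  obtains C where "is_cycle E C" "\<Union>C \<subseteq> insert a (set xs \<union> set ys)"
    "{a, hd xs} \<in> C" "{a, hd ys} \<in> C"
proof -
  have "\<exists>v\<in>set xs. v \<in> set ys" using nonempty meet by (metis last_in_set)
  then obtain xs1 v xs2 where xs_split: "xs = xs1 @ v # xs2" and "v \<in> set ys"
    and first_meet: "\<forall>u\<in>set xs1. u \<notin> set ys"
    using split_list_first_prop[of xs "\<lambda>v. v \<in> set ys"] by blast
  then obtain ys1 ys2 where ys_split: "ys = ys1 @ v # ys2" using split_list by metis
  \<comment> \<open>out along xs to its first vertex v on ys, back along ys\<close>
  define cs where "cs = a # xs1 @ v # rev ys1"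
  have last_cs: "last cs = hd ys"
    unfolding cs_def ys_split by (cases ys1) (auto simp: last_rev)
  have "distinct cs"
    using distinct first_meet unfolding cs_def xs_split ys_split by auto
  moreover have "3 \<le> length cs"
    using branch unfolding cs_def xs_split ys_split by (cases xs1; cases ys1) auto
  moreover have "walk E cs"
  proof -
    have "walk E ys" using walk_suffix[of E "[a]" ys] walks(2) nonempty(2) by simp
    then have "walk E (ys1 @ [v])" using walk_prefix[of E "ys1 @ [v]" ys2] ys_split by simp
    then have "walk E (v # rev ys1)" using walk_rev[OF sym] by fastforce
    moreover have "walk E (a # xs1 @ [v])"
      using walks(1) walk_prefix[of E "a # xs1 @ [v]" xs2] xs_split by simp
    ultimately show ?thesis unfolding cs_def using walk_join[of E "a # xs1" v "rev ys1"] by simp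
  qed
  moreover have "E (last cs) (hd cs)"
    unfolding last_cs using walks(2) nonempty(2) sympD[OF sym] by (simp add: cs_def walk_Cons)
  ultimately have "is_cycle E (cycle_edges cs)" by (rule is_cycle_cycle_edges)
  moreover have "\<Union>(cycle_edges cs) \<subseteq> insert a (set xs \<union> set ys)"
    using cycle_edges_vertices[of cs] unfolding cs_def xs_split ys_split by auto
  moreover have "{a, hd xs} \<in> cycle_edges cs"
    using cycle_edges_first[of "xs1 @ v # rev ys1" a] unfolding cs_def xs_split by (cases xs1) auto
  moreover have "{a, hd ys} \<in> cycle_edges cs"
    using cycle_edges_closing[of cs] last_cs by (simp add: cs_def insert_commute)
  ultimately show thesis using that by blast
qed

lemma gpaths_branch_cycle:
  assumes sym: "symp E"
    and paths: "gpath E (c @ xs)" "gpath E (c @ ys)"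
    and "c \<noteq> []" "xs \<noteq> []" "ys \<noteq> []" "last xs = last ys" "hd xs \<noteq> hd ys"
  obtains C where "is_cycle E C" "\<Union>C \<subseteq> insert (last c) (set xs \<union> set ys)"
    "{last c, hd xs} \<in> C" "{last c, hd ys} \<in> C"
proof -
  have split: "c @ zs = butlast c @ (last c # zs)" for zs using \<open>c \<noteq> []\<close> by simp
  have walks: "walk E (last c # xs)" "walk E (last c # ys)"
    using paths walk_suffix by (metis gpath_def list.distinct(1) split)+
  have distinct: "distinct (last c # xs)" "distinct (last c # ys)"
    using paths by (metis gpath_def distinct_append split)+
  show thesis
    using branching_walks_cycle[OF sym walks distinct assms(5-8)] that by blast
qed

lemma distinct_prefix_last_eq:
  assumes "distinct ys" "prefix xs ys" "xs \<noteq> []" "last xs = last ys"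
  shows "xs = ys"
proof -
  obtain zs where ys: "ys = xs @ zs" using assms(2) by (auto simp: prefix_def)
  show ?thesis
  proof (rule ccontr)
    assume "xs \<noteq> ys"
    then have "last ys \<in> set zs" "last xs \<in> set xs" using ys assms(3) by auto
    then show False using assms(1,4) ys by auto
  qed
qed

lemma gpaths_parallel:
  assumes "gpath E P" "gpath E Q" "P \<noteq> Q" "last P = last Q"
  shows "P \<parallel> Q"
proof -
  have "P \<noteq> []" "Q \<noteq> []" using assms(1,2) by (auto simp: gpath_def)
  then show ?thesis using assms distinct_prefix_last_eq[of Q P] distinct_prefix_last_eq[of P Q]
    by (auto simp: gpath_def parallel_def)
qed

lemma gpaths_common_prefix_cycle:
  assumes sym: "symp E"
    and paths: "gpath E (c @ xs)" "gpath E (c @ ys)"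
    and "c \<noteq> []" "xs \<noteq> ys" "last (c @ xs) = last (c @ ys)"
  obtains C where "is_cycle E C" "\<Union>C \<subseteq> insert (last c) (set xs \<union> set ys)"
proof -
  have "c @ xs \<parallel> c @ ys" using gpaths_parallel[OF paths] assms(5,6) by simp
  then have "xs \<parallel> ys" by (induction c) (auto dest: parallel_cancel)
  then obtain es b bs b' bs' where "b \<noteq> b'" and xs: "xs = es @ b # bs" and ys: "ys = es @ b' # bs'"
    using parallel_decomp by blast
  obtain C where "is_cycle E C" "\<Union>C \<subseteq> insert (last (c @ es)) (set (b # bs) \<union> set (b' # bs'))"
    by (rule gpaths_branch_cycle[of E "c @ es" "b # bs" "b' # bs'"])
      (use sym paths assms(4,6) \<open>b \<noteq> b'\<close> xs ys in auto)
  moreover have "insert (last (c @ es)) (set (b # bs) \<union> set (b' # bs'))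
      \<subseteq> insert (last c) (set xs \<union> set ys)"
    using xs ys by (cases es) auto
  ultimately show thesis using that by blast
qed

lemma two_gpaths_cycle:
  assumes sym: "symp E"
    and "gpath E P" "gpath E Q" "P \<noteq> Q" "hd P = hd Q" "last P = last Q"
  obtains C where "is_cycle E C" "\<Union>C \<subseteq> set P \<union> set Q"
proof -
  have "P \<noteq> []" "Q \<noteq> []" using assms(2,3) by (auto simp: gpath_def)
  then obtain x P' Q' where P: "P = x # P'" and Q: "Q = x # Q'"
    using assms(5) by (metis list.collapse)
  obtain C where "is_cycle E C" "\<Union>C \<subseteq> insert x (set P' \<union> set Q')"
    by (rule gpaths_common_prefix_cycle[of E "[x]" P' Q']) (use sym assms(2-6) P Q in auto)
  then show thesis using that P Q by auto
qed

section \<open>Short paths in a neighbourhood with one cycle\<close>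

lemma parallel3_decomp:
  "xs \<parallel> ys \<Longrightarrow> xs \<parallel> zs \<Longrightarrow> ys \<parallel> zs \<Longrightarrow>
    \<exists>c x y z xs' ys' zs'. xs = c @ x # xs' \<and> ys = c @ y # ys' \<and> zs = c @ z # zs' \<and> \<not> (x = y \<and> y = z)"
proof (induction xs arbitrary: ys zs)
  case (Cons x xs)
  obtain y ys' z zs' where ys: "ys = y # ys'" and zs: "zs = z # zs'"
    using Cons.prems by (metis list.exhaust parallel_Nil1)
  show ?case
  proof (cases "x = y \<and> y = z")
    case True
    then have "xs \<parallel> ys'" "xs \<parallel> zs'" "ys' \<parallel> zs'"
      using Cons.prems ys zs by (auto dest: parallel_cancel)
    then obtain c x' y' z' xs'' ys'' zs'' where "xs = c @ x' # xs''" "ys' = c @ y' # ys''"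
      "zs' = c @ z' # zs''" "\<not> (x' = y' \<and> y' = z')"
      using Cons.IH by blast
    then show ?thesis using True ys zs by (intro exI[of _ "x # c"]) auto
  next
    case False
    then show ?thesis using ys zs by (intro exI[of _ "[]"]) auto
  qed
qed simp

lemma unique_cycle_no_nested_branching:
  assumes sym: "symp E"
    and unique: "\<And>C1 C2. cycle_in E C1 S \<Longrightarrow> cycle_in E C2 S \<Longrightarrow> C1 = C2"
    and P: "gpath E (c @ p # xs)" and Q: "gpath E (c @ p # ys)" and R: "gpath E (c @ q # zs)"
    and "c \<noteq> []" "p \<noteq> q" "xs \<noteq> ys"
    and last: "last (c @ p # xs) = last (c @ p # ys)" "last (c @ p # xs) = last (c @ q # zs)"
    and in_S: "set (c @ p # xs) \<subseteq> S" "set (c @ p # ys) \<subseteq> S" "set (c @ q # zs) \<subseteq> S"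
  shows False
proof -
  obtain C1 where C1: "is_cycle E C1" "\<Union>C1 \<subseteq> insert (last c) (set (p # xs) \<union> set (q # zs))"
    "{last c, p} \<in> C1"
    by (rule gpaths_branch_cycle[of E c "p # xs" "q # zs"]) (use sym P R assms(6,7) last in auto)
  obtain C2 where C2: "is_cycle E C2" "\<Union>C2 \<subseteq> insert p (set xs \<union> set ys)"
    by (rule gpaths_common_prefix_cycle[of E "c @ [p]" xs ys]) (use sym P Q assms(8) last in auto)
  \<comment> \<open>C2 lies beyond p, hence avoids the branch vertex last c, which lies on C1\<close>
  have "cycle_in E C1 S" "cycle_in E C2 S"
    using C1(1,2) C2 in_S last_in_set[OF \<open>c \<noteq> []\<close>] by (auto simp: cycle_in_def)
  then have "C1 = C2" by (rule unique)
  moreover have "last c \<in> \<Union>C1" using C1(3) by blast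
  moreover have "last c \<notin> insert p (set xs \<union> set ys)"
    using P Q last_in_set[OF \<open>c \<noteq> []\<close>] by (auto simp: gpath_def)
  ultimately show False using C2(2) by blast
qed

lemma unique_cycle_no_threefold_branching:
  assumes sym: "symp E"
    and unique: "\<And>C1 C2. cycle_in E C1 S \<Longrightarrow> cycle_in E C2 S \<Longrightarrow> C1 = C2"
    and P: "gpath E (c @ p # xs)" and Q: "gpath E (c @ q # ys)" and R: "gpath E (c @ r # zs)"
    and "c \<noteq> []" "p \<noteq> q" "p \<noteq> r" "q \<noteq> r"
    and last: "last (c @ p # xs) = last (c @ q # ys)" "last (c @ p # xs) = last (c @ r # zs)"
    and in_S: "set (c @ p # xs) \<subseteq> S" "set (c @ q # ys) \<subseteq> S" "set (c @ r # zs) \<subseteq> S"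
  shows False
proof -
  obtain C1 where C1: "is_cycle E C1" "\<Union>C1 \<subseteq> insert (last c) (set (p # xs) \<union> set (q # ys))"
    "{last c, p} \<in> C1" "{last c, q} \<in> C1"
    by (rule gpaths_branch_cycle[of E c "p # xs" "q # ys"]) (use sym P Q assms(6,7) last in auto)
  obtain C2 where C2: "is_cycle E C2" "\<Union>C2 \<subseteq> insert (last c) (set (p # xs) \<union> set (r # zs))"
    "{last c, r} \<in> C2"
    by (rule gpaths_branch_cycle[of E c "p # xs" "r # zs"]) (use sym P R assms(6,8) last in auto)
  have "cycle_in E C1 S" "cycle_in E C2 S"
    using C1(1,2) C2(1,2) in_S last_in_set[OF \<open>c \<noteq> []\<close>] by (auto simp: cycle_in_def)
  then have "C1 = C2" by (rule unique)
  then have "p = q \<or> p = r \<or> q = r"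
    using is_cycle_three_neighbours[OF C1(1,3,4)] C2(3) by simp
  then show False using assms(7-9) by blast
qed

lemma unique_cycle_at_most_two_gpaths:
  assumes sym: "symp E"
    and unique: "\<And>C1 C2. cycle_in E C1 S \<Longrightarrow> cycle_in E C2 S \<Longrightarrow> C1 = C2"
    and paths: "gpath E P" "gpath E Q" "gpath E R"
    and hd: "hd P = hd Q" "hd P = hd R" and last: "last P = last Q" "last P = last R"
    and in_S: "set P \<subseteq> S" "set Q \<subseteq> S" "set R \<subseteq> S"
  shows "P = Q \<or> P = R \<or> Q = R"
proof (rule ccontr)
  assume pairwise_distinct: "\<not> ?thesis"
  then have "P \<parallel> Q" "P \<parallel> R" "Q \<parallel> R"
    using gpaths_parallel paths last by metis+
  then obtain c p q r ps qs rs where P: "P = c @ p # ps" and Q: "Q = c @ q # qs"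
    and R: "R = c @ r # rs" and branch: "\<not> (p = q \<and> q = r)"
    using parallel3_decomp by blast
  have "c \<noteq> []" using hd branch P Q R by auto
  consider "p \<noteq> q" "p \<noteq> r" "q \<noteq> r" | "p = q" "p \<noteq> r" | "p = r" "p \<noteq> q" | "q = r" "p \<noteq> q"
    using branch by blast
  then show False
  proof cases
    case 1
    show False
      by (rule unique_cycle_no_threefold_branching[of E S c p ps q qs r rs])
        (use 1 sym unique \<open>c \<noteq> []\<close> paths in_S last P Q R in auto)
  next
    case 2
    show False
      by (rule unique_cycle_no_nested_branching[of E S c p ps qs r rs])
        (use 2 sym unique \<open>c \<noteq> []\<close> pairwise_distinct paths in_S last P Q R in auto)
  next
    case 3
    show False
      by (rule unique_cycle_no_nested_branching[of E S c p ps rs q qs])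
        (use 3 sym unique \<open>c \<noteq> []\<close> pairwise_distinct paths in_S last P Q R in auto)
  next
    case 4
    show False
      by (rule unique_cycle_no_nested_branching[of E S c q qs rs p ps])
        (use 4 sym unique \<open>c \<noteq> []\<close> pairwise_distinct paths in_S last P Q R in auto)
  qed
qed

lemma card_paths_le_le_two:
  assumes edges_in: "\<And>u v. E u v \<Longrightarrow> u \<in> V \<and> v \<in> V" and sym: "symp E"
    and "i \<in> V"
    and unique: "\<And>C1 C2. cycle_in E C1 (ball V E i r) \<Longrightarrow> cycle_in E C2 (ball V E i r) \<Longrightarrow> C1 = C2"
  shows "card (paths_le E r i j) \<le> 2"
proof (rule ccontr)
  assume "\<not> ?thesis"
  then obtain T where "T \<subseteq> paths_le E r i j" "card T = 3"
    by (metis obtain_subset_with_card_n not_le Suc_leI numeral_2_eq_2 numeral_3_eq_3)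
  then obtain P Q R where PQR: "P \<in> paths_le E r i j" "Q \<in> paths_le E r i j" "R \<in> paths_le E r i j"
    and "P \<noteq> Q" "P \<noteq> R" "Q \<noteq> R"
    by (auto simp: card_3_iff)
  have in_ball: "set X \<subseteq> ball V E i r" if "X \<in> paths_le E r i j" for X
    using paths_le_subset_balls[OF edges_in sym \<open>i \<in> V\<close> that] by blast
  have "P = Q \<or> P = R \<or> Q = R"
    by (rule unique_cycle_at_most_two_gpaths[OF sym unique])
      (use PQR in_ball in \<open>auto simp: paths_le_def\<close>)
  with \<open>P \<noteq> Q\<close> \<open>P \<noteq> R\<close> \<open>Q \<noteq> R\<close> show False by blast
qed

lemma cyc_rel_if_two_paths_le:
  assumes edges_in: "\<And>u v. E u v \<Longrightarrow> u \<in> V \<and> v \<in> V" and sym: "symp E"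
    and "i \<in> V" and "2 \<le> card (paths_le E r i j)"
  shows "cyc_rel V E r i j"
proof -
  obtain T where "T \<subseteq> paths_le E r i j" "card T = 2"
    using obtain_subset_with_card_n[OF assms(4)] by metis
  then obtain P Q where P: "P \<in> paths_le E r i j" and Q: "Q \<in> paths_le E r i j" and "P \<noteq> Q"
    by (auto simp: card_2_iff)
  have "gpath E P" "gpath E Q" "hd P = hd Q" "last P = last Q"
    using P Q by (auto simp: paths_le_def)
  then obtain C where "is_cycle E C" "\<Union>C \<subseteq> set P \<union> set Q"
    using two_gpaths_cycle[OF sym _ _ \<open>P \<noteq> Q\<close>] by blast
  moreover have "set P \<union> set Q \<subseteq> ball V E i r \<inter> ball V E j r"
    using paths_le_subset_balls[OF edges_in sym \<open>i \<in> V\<close>] P Q by blast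
  ultimately show ?thesis unfolding cyc_rel_def cycle_in_def by blast
qed

theorem proposition1:
  fixes n r :: nat and E :: "nat \<Rightarrow> nat \<Rightarrow> bool"
  assumes edges_in: "\<And>u v. E u v \<Longrightarrow> u \<in> {1..n} \<and> v \<in> {1..n}"
    and sym: "\<And>u v. E u v \<Longrightarrow> E v u"
    and irrefl: "\<And>u. \<not> E u u"
    and r: "r \<ge> 1"
    and one_cycle: "\<And>v C1 C2. v \<in> {1..n} \<Longrightarrow> cycle_in E C1 (ball {1..n} E v r)
                     \<Longrightarrow> cycle_in E C2 (ball {1..n} E v r) \<Longrightarrow> C1 = C2"
    and i: "i \<in> {1..n}" and j: "j \<in> {1..n}"
  defines "B \<equiv> dist_mat E r i j - saw_mat E r i j"
  shows "(B \<noteq> 0 \<longrightarrow> cyc_rel {1..n} E r i j)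
       \<and> (B \<noteq> 0 \<longrightarrow> card (paths_le E r i j) \<ge> 2)
       \<and> \<bar>B\<bar> \<le> 1
       \<and> card (paths_le E r i j) \<le> 2"
proof -
  have "symp E" using sym by (rule sympI)
  have at_most_two: "card (paths_le E r i j) \<le> 2"
    using card_paths_le_le_two[OF edges_in \<open>symp E\<close> i one_cycle[OF i]] .
  have "finite (paths_le E r i j)"
    by (rule finite_paths_le[OF finite_atLeastAtMost edges_in i])
  then have "\<bar>B\<bar> \<le> 1 \<and> (B \<noteq> 0 \<longrightarrow> 2 \<le> card (paths_le E r i j))"
    using dist_mat_saw_mat_bounds[OF _ at_most_two] unfolding B_def by simp
  then show ?thesis
    using cyc_rel_if_two_paths_le[OF edges_in \<open>symp E\<close> i] at_most_two by blast
qed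

end
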